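(* Consider the MTGC algorithm described in the context. Suppose (A1) and (A2) hold. Then for every global round $t$, $$\sum_{e=0}^{E-1}\frac1N\sum_{j=1}^NZ_j^{t,e}\le4L^2Q_t+4L^2\sum_{e=0}^{E-1}\frac1N\sum_{j=1}^N\Theta_j^{t,e}+2\frac EH\sigma^2+\sigma^2.$$
   Context: Setting: $N$ groups; group $j$ has a set $\mathcal C_j$ of $n_j\ge1$ clients, sets pairwise disjoint. Client $i$ has distribution $\mathcal D_i$, stochastic loss $F_i(\boldsymbol x,\xi)$, $F_i(\boldsymbol x)=\mathbb E_{\xi\sim\mathcal D_i}F_i(\boldsymbol x,\xi)$; $f_j=\frac1{n_j}\sum_{i\in\mathcal C_j}F_i$, $f=\frac1N\sum_jf_j$. For client $i$, $j$ denotes its group. (A1): $\|\nabla F_i(\boldsymbol x)-\nabla F_i(\boldsymbol y)\|\le L\|\boldsymbol x-\boldsymbol y\|$ for all $\boldsymbol x,\boldsymbol y,i$. (A2): $\mathbb E_{\xi\sim\mathcal D_i}\nabla F_i(\boldsymbol x,\xi)=\nabla F_i(\boldsymbol x)$ and $\mathbb E_{\xi\sim\mathcal D_i}\|\nabla F_i(\boldsymbol x,\xi)-\nabla F_i(\boldsymbol x)\|^2\le\sigma^2$ for all $\boldsymbol x,i$. MTGC: initial $\bar{\boldsymbol x}^0$, integers $E,H\ge1$, $\gamma>0$; samples $\xi_{i,h}^{t,e}\sim\mathcal D_i$ fresh and independent of the past. $\boldsymbol y_j^0=-\frac1{n_j}\sum_{i\in\mathcal C_j}\nabla F_i(\bar{\boldsymbol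 x}^0,\xi_{i,0}^{0,0})+\frac1N\sum_{j'}\frac1{n_{j'}}\sum_{i\in\mathcal C_{j'}}\nabla F_i(\bar{\boldsymbol x}^0,\xi_{i,0}^{0,0})$. For each $t\ge0$: $\bar{\boldsymbol x}_j^{t,0}=\bar{\boldsymbol x}^t$; $\boldsymbol z_i^{t,0}=-\nabla F_i(\bar{\boldsymbol x}^t,\xi_{i,0}^{t,0})+\frac1{n_j}\sum_{i'\in\mathcal C_j}\nabla F_{i'}(\bar{\boldsymbol x}^t,\xi_{i',0}^{t,0})$; for $e=0,\dots,E-1$: $\boldsymbol x_{i,0}^{t,e}=\bar{\boldsymbol x}_j^{t,e}$, $\boldsymbol x_{i,h+1}^{t,e}=\boldsymbol x_{i,h}^{t,e}-\gamma(\nabla F_i(\boldsymbol x_{i,h}^{t,e},\xi_{i,h}^{t,e})+\boldsymbol z_i^{t,e}+\boldsymbol y_j^t)$ for $h=0,\dots,H-1$, $\bar{\boldsymbol x}_j^{t,e+1}=\frac1{n_j}\sum_{i\in\mathcal C_j}\boldsymbol x_{i,H}^{t,e}$, $\boldsymbol z_i^{t,e+1}=\boldsymbol z_i^{t,e}+\frac1{H\gamma}(\boldsymbol x_{i,H}^{t,e}-\bar{\boldsymbol x}_j^{t,e+1})$; then $\bar{\boldsymbol x}^{t+1}=\frac1N\sum_j\bar{\boldsymbol x}_j^{t,E}$, $\boldsymbol y_j^{t+1}=\boldsymbol y_j^t+\frac1{HE\gamma}(\bar{\boldsymbol x}_j^{t,E}-\bar{\boldsymbol x}^{t+1})$. $\mathbb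 E$ is over all randomness. Notation: $Z_j^{t,e}=\frac1{n_j}\sum_{i\in\mathcal C_j}\mathbb E\|\boldsymbol z_i^{t,e}+\nabla F_i(\bar{\boldsymbol x}_j^{t,e})-\nabla f_j(\bar{\boldsymbol x}_j^{t,e})\|^2$; $\Theta_j^{t,e}=\mathbb E\|\bar{\boldsymbol x}_j^{t,e+1}-\bar{\boldsymbol x}_j^{t,e}\|^2$; $Q_t=\sum_{e=0}^{E-1}\frac1{NH}\sum_j\frac1{n_j}\sum_{i\in\mathcal C_j}\sum_{h=0}^{H-1}\mathbb E\|\bar{\boldsymbol x}_j^{t,e}-\boldsymbol x_{i,h}^{t,e}\|^2$. *)

theory Defs
  imports "HOL-Probability.Probability"
begin

text \<open>Expected squared norm of a random vector, as an extended nonnegative real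
  (always defined; no integrability side conditions needed).\<close>
definition sqE :: "'w measure \<Rightarrow> ('w \<Rightarrow> 'a::real_normed_vector) \<Rightarrow> ennreal" where
  "sqE M X = (\<integral>\<^sup>+ \<omega>. ennreal ((norm (X \<omega>))\<^sup>2) \<partial>M)"

end

theory Submission
  imports Defs
begin

(* After local epoch e + 1 the z-update has a closed form (the z_i of a group sum to zero):
   the correction error of client i is minus the deviation from its group mean of
   b_i = (1/H) sum_h grad F_i(x_{i,h}, xi_{i,h}) - grad F_i(xbar_j^{e+1}).
   Deviations from a mean have smaller second moment, and b_i splits into the averaged sampling
   noise, the client drift (1/H) sum_h (grad F_i(x_{i,h}) - grad F_i(xbar_j^e)) and the change
   grad F_i(xbar_j^e) - grad F_i(xbar_j^{e+1}) of the group model; by (A1) the last two give the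
   Q_t and Theta terms.  The sampling noises are martingale differences: each sample is
   independent of the sigma-algebra generated by all earlier samples, which contains the current
   iterate, so E |sum_h noise_h|^2 <= H sigma^2 by (A2).  At e = 0 the correction error is the
   centred noise of a single sample, of second moment at most sigma^2. *)

lemma norm_add_sq_le:
  fixes u v :: "'a::real_normed_vector"
  shows "(norm (u + v))\<^sup>2 \<le> 2 * (norm u)\<^sup>2 + 2 * (norm v)\<^sup>2"
proof -
  have "(norm (u + v))\<^sup>2 \<le> (norm u + norm v)\<^sup>2"
    by (simp add: norm_triangle_ineq power_mono)
  also have "\<dots> \<le> 2 * (norm u)\<^sup>2 + 2 * (norm v)\<^sup>2"
    using zero_le_power2[of "norm u - norm v"] by (simp add: power2_sum power2_diff)
  finally show ?thesis .
qed

lemma norm_mean_sq_le: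
  fixes w :: "'i \<Rightarrow> 'a::real_normed_vector"
  shows "(norm ((1 / real (card A)) *\<^sub>R (\<Sum>i\<in>A. w i)))\<^sup>2 \<le> (1 / real (card A)) * (\<Sum>i\<in>A. (norm (w i))\<^sup>2)"
proof -
  have "(norm (\<Sum>i\<in>A. w i))\<^sup>2 \<le> (\<Sum>i\<in>A. norm (w i))\<^sup>2"
    by (simp add: norm_sum power_mono)
  also have "\<dots> \<le> (\<Sum>i\<in>A. (norm (w i))\<^sup>2) * real (card A)"
    by (rule sum_squared_le_sum_of_squares)
  finally show ?thesis
    by (cases "card A = 0") (simp_all add: power2_eq_square field_simps)
qed

lemma sum_norm_sq_sub_mean_le:
  fixes b :: "'i \<Rightarrow> 'a::real_inner"
  shows "(\<Sum>i\<in>A. (norm (b i - (1 / real (card A)) *\<^sub>R (\<Sum>k\<in>A. b k)))\<^sup>2) \<le> (\<Sum>i\<in>A. (norm (b i))\<^sup>2)"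
proof (cases "card A = 0")
  case False
  define c where "c = real (card A)"
  define m where "m = (1 / c) *\<^sub>R (\<Sum>k\<in>A. b k)"
  have c: "c > 0" using False by (simp add: c_def)
  have sum_b: "(\<Sum>k\<in>A. b k) = c *\<^sub>R m" using c by (simp add: m_def)
  have "(\<Sum>i\<in>A. (norm (b i - m))\<^sup>2) = (\<Sum>i\<in>A. (norm (b i))\<^sup>2) - 2 * ((\<Sum>i\<in>A. b i) \<bullet> m) + c * (m \<bullet> m)"
    by (simp add: power2_norm_eq_inner inner_diff_left inner_diff_right inner_commute
        sum.distrib sum_subtractf inner_sum_left inner_sum_right sum_distrib_left c_def)
  also have "\<dots> = (\<Sum>i\<in>A. (norm (b i))\<^sup>2) - c * (m \<bullet> m)"
    by (simp add: sum_b)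
  finally show ?thesis using c by (simp add: m_def c_def)
qed simp

lemma correction_update_closed_form:
  fixes xH S z :: "'i \<Rightarrow> 'a::real_vector"
  assumes A: "finite A" "A \<noteq> {}" "i \<in> A" and c: "c \<noteq> 0" "\<gamma> \<noteq> 0"
    and xH: "\<And>i. i \<in> A \<Longrightarrow> xH i = u - \<gamma> *\<^sub>R (S i + c *\<^sub>R (z i + v))"
    and z_sum: "(\<Sum>i\<in>A. z i) = 0"
  shows "z i + (1 / (c * \<gamma>)) *\<^sub>R (xH i - (1 / real (card A)) *\<^sub>R (\<Sum>k\<in>A. xH k))
    = - ((1 / c) *\<^sub>R (S i - (1 / real (card A)) *\<^sub>R (\<Sum>k\<in>A. S k)))"
proof -
  define n where "n = real (card A)"
  have n: "n \<noteq> 0" using A by (simp add: n_def)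
  have "(\<Sum>k\<in>A. xH k) = n *\<^sub>R u - \<gamma> *\<^sub>R ((\<Sum>k\<in>A. S k) + (n * c) *\<^sub>R v)"
    using xH z_sum
    by (simp add: n_def sum_subtractf sum.distrib sum_constant_scaleR scaleR_right_distrib
        flip: scaleR_sum_right)
  then have "(1 / n) *\<^sub>R (\<Sum>k\<in>A. xH k) = u - \<gamma> *\<^sub>R ((1 / n) *\<^sub>R (\<Sum>k\<in>A. S k) + c *\<^sub>R v)"
    using n by (simp add: scaleR_right_diff_distrib scaleR_right_distrib)
  then have "xH i - (1 / n) *\<^sub>R (\<Sum>k\<in>A. xH k) = - \<gamma> *\<^sub>R (S i - (1 / n) *\<^sub>R (\<Sum>k\<in>A. S k) + c *\<^sub>R z i)"
    unfolding xH[OF A(3)] by (simp add: algebra_simps)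
  then show ?thesis
    using c unfolding n_def[symmetric] by (simp only:) (simp add: algebra_simps)
qed

lemma sqE_uminus [simp]: "sqE M (\<lambda>\<omega>. - X \<omega>) = sqE M X"
  by (simp add: sqE_def)

lemma sqE_minus_commute: "sqE M (\<lambda>\<omega>. X \<omega> - Y \<omega>) = sqE M (\<lambda>\<omega>. Y \<omega> - X \<omega>)"
  by (simp add: sqE_def norm_minus_commute)

lemma sqE_add_le:
  fixes X Y :: "'w \<Rightarrow> 'a::real_normed_vector"
  assumes "X \<in> borel_measurable M" "Y \<in> borel_measurable M"
  shows "sqE M (\<lambda>\<omega>. X \<omega> + Y \<omega>) \<le> 2 * sqE M X + 2 * sqE M Y"
proof -
  have "ennreal ((norm (u + v))\<^sup>2) \<le> 2 * ennreal ((norm u)\<^sup>2) + 2 * ennreal ((norm v)\<^sup>2)" for u v :: 'a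
    using ennreal_leI[OF norm_add_sq_le[of u v]] by (simp add: ennreal_plus ennreal_mult)
  then have "sqE M (\<lambda>\<omega>. X \<omega> + Y \<omega>) \<le> (\<integral>\<^sup>+\<omega>. 2 * ennreal ((norm (X \<omega>))\<^sup>2) + 2 * ennreal ((norm (Y \<omega>))\<^sup>2) \<partial>M)"
    unfolding sqE_def by (intro nn_integral_mono) simp
  also have "\<dots> = 2 * sqE M X + 2 * sqE M Y"
    unfolding sqE_def using assms by (simp add: nn_integral_add nn_integral_cmult)
  finally show ?thesis .
qed

lemma sqE_add3_le:
  fixes X Y Z :: "'w \<Rightarrow> 'a::{real_normed_vector, second_countable_topology}"
  assumes "X \<in> borel_measurable M" "Y \<in> borel_measurable M" "Z \<in> borel_measurable M"
  shows "sqE M (\<lambda>\<omega>. X \<omega> + (Y \<omega> + Z \<omega>)) \<le> 2 * sqE M X + 4 * sqE M Y + 4 * sqE M Z"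
proof -
  have "sqE M (\<lambda>\<omega>. X \<omega> + (Y \<omega> + Z \<omega>)) \<le> 2 * sqE M X + 2 * sqE M (\<lambda>\<omega>. Y \<omega> + Z \<omega>)"
    using assms by (intro sqE_add_le borel_measurable_add)
  also have "\<dots> \<le> 2 * sqE M X + 2 * (2 * sqE M Y + 2 * sqE M Z)"
    using assms by (intro add_left_mono mult_left_mono sqE_add_le) auto
  finally show ?thesis
    by (simp add: distrib_left mult.assoc[symmetric] add.assoc)
qed

lemma sqE_scaleR:
  fixes X :: "'w \<Rightarrow> 'a::real_normed_vector"
  assumes "X \<in> borel_measurable M"
  shows "sqE M (\<lambda>\<omega>. c *\<^sub>R X \<omega>) = ennreal (c\<^sup>2) * sqE M X"
  unfolding sqE_def using assms
  by (simp add: power_mult_distrib ennreal_mult nn_integral_cmult)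

lemma sqE_mean_le:
  fixes X :: "'i \<Rightarrow> 'w \<Rightarrow> 'a::real_normed_vector"
  assumes "\<And>i. i \<in> A \<Longrightarrow> X i \<in> borel_measurable M"
  shows "sqE M (\<lambda>\<omega>. (1 / real (card A)) *\<^sub>R (\<Sum>i\<in>A. X i \<omega>))
    \<le> ennreal (1 / real (card A)) * (\<Sum>i\<in>A. sqE M (X i))"
proof -
  have "ennreal ((norm ((1 / real (card A)) *\<^sub>R (\<Sum>i\<in>A. w i)))\<^sup>2)
      \<le> ennreal (1 / real (card A)) * (\<Sum>i\<in>A. ennreal ((norm (w i))\<^sup>2))" for w :: "_ \<Rightarrow> 'a"
    using ennreal_leI[OF norm_mean_sq_le[of A w]]
    by (simp only: ennreal_mult'[of "1 / real (card A)"] sum_ennreal zero_le_power2 of_nat_0_le_iff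
        divide_nonneg_nonneg zero_le_one)
  then have "sqE M (\<lambda>\<omega>. (1 / real (card A)) *\<^sub>R (\<Sum>i\<in>A. X i \<omega>))
      \<le> (\<integral>\<^sup>+\<omega>. ennreal (1 / real (card A)) * (\<Sum>i\<in>A. ennreal ((norm (X i \<omega>))\<^sup>2)) \<partial>M)"
    unfolding sqE_def by (intro nn_integral_mono) simp
  also have "\<dots> = ennreal (1 / real (card A)) * (\<Sum>i\<in>A. sqE M (X i))"
    unfolding sqE_def using assms by (simp add: nn_integral_cmult nn_integral_sum del: sum_ennreal)
  finally show ?thesis .
qed

lemma sum_sqE_sub_mean_le:
  fixes X :: "'i \<Rightarrow> 'w \<Rightarrow> 'a::euclidean_space"
  assumes "\<And>i. i \<in> A \<Longrightarrow> X i \<in> borel_measurable M"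
  shows "(\<Sum>i\<in>A. sqE M (\<lambda>\<omega>. X i \<omega> - (1 / real (card A)) *\<^sub>R (\<Sum>k\<in>A. X k \<omega>)))
    \<le> (\<Sum>i\<in>A. sqE M (X i))"
proof -
  have "(\<Sum>i\<in>A. sqE M (\<lambda>\<omega>. X i \<omega> - (1 / real (card A)) *\<^sub>R (\<Sum>k\<in>A. X k \<omega>)))
      = (\<integral>\<^sup>+\<omega>. ennreal (\<Sum>i\<in>A. (norm (X i \<omega> - (1 / real (card A)) *\<^sub>R (\<Sum>k\<in>A. X k \<omega>)))\<^sup>2) \<partial>M)"
    unfolding sqE_def using assms by (simp add: nn_integral_sum flip: sum_ennreal)
  also have "\<dots> \<le> (\<integral>\<^sup>+\<omega>. ennreal (\<Sum>i\<in>A. (norm (X i \<omega>))\<^sup>2) \<partial>M)"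
    by (intro nn_integral_mono ennreal_leI sum_norm_sq_sub_mean_le)
  also have "\<dots> = (\<Sum>i\<in>A. sqE M (X i))"
    unfolding sqE_def using assms by (simp add: nn_integral_sum flip: sum_ennreal)
  finally show ?thesis .
qed

lemma sqE_lipschitz_le:
  fixes f :: "'a::real_normed_vector \<Rightarrow> 'b::real_normed_vector"
  assumes "\<And>u v. norm (f u - f v) \<le> L * norm (u - v)" "(\<lambda>\<omega>. U \<omega> - V \<omega>) \<in> borel_measurable M"
  shows "sqE M (\<lambda>\<omega>. f (U \<omega>) - f (V \<omega>)) \<le> ennreal (L\<^sup>2) * sqE M (\<lambda>\<omega>. U \<omega> - V \<omega>)"
proof -
  have "(norm (f u - f v))\<^sup>2 \<le> L\<^sup>2 * (norm (u - v))\<^sup>2" for u v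
    using power_mono[OF assms(1)[of u v]] by (simp add: power_mult_distrib)
  then have "sqE M (\<lambda>\<omega>. f (U \<omega>) - f (V \<omega>)) \<le> (\<integral>\<^sup>+\<omega>. ennreal (L\<^sup>2) * ennreal ((norm (U \<omega> - V \<omega>))\<^sup>2) \<partial>M)"
    unfolding sqE_def by (intro nn_integral_mono) (simp add: ennreal_leI flip: ennreal_mult)
  also have "\<dots> = ennreal (L\<^sup>2) * sqE M (\<lambda>\<omega>. U \<omega> - V \<omega>)"
    unfolding sqE_def using assms(2) by (simp add: nn_integral_cmult)
  finally show ?thesis .
qed

section \<open>Independence of a sample from the past\<close>

definition generated_sigma :: "'w measure \<Rightarrow> ('i \<Rightarrow> 's measure) \<Rightarrow> ('i \<Rightarrow> 'w \<Rightarrow> 's) \<Rightarrow> 'i set \<Rightarrow> 'w measure" where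
  "generated_sigma M D X J = vimage_algebra (space M) (\<lambda>\<omega>. restrict (\<lambda>k. X k \<omega>) J) (PiM J D)"

lemma space_generated_sigma [simp]: "space (generated_sigma M D X J) = space M"
  by (simp add: generated_sigma_def)

lemma restrict_family_funcset:
  assumes "\<And>k. k \<in> J \<Longrightarrow> X k \<in> measurable M (D k)"
  shows "(\<lambda>\<omega>. restrict (\<lambda>k. X k \<omega>) J) \<in> space M \<rightarrow> space (PiM J D)"
  using measurable_space[OF measurable_restrict[OF assms]] by auto

lemma measurable_generated_sigma_var:
  assumes "\<And>k. k \<in> J \<Longrightarrow> X k \<in> measurable M (D k)" "k \<in> J"
  shows "X k \<in> measurable (generated_sigma M D X J) (D k)"
proof -
  have "(\<lambda>\<omega>. restrict (\<lambda>k. X k \<omega>) J) \<in> measurable (generated_sigma M D X J) (PiM J D)"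
    unfolding generated_sigma_def using assms(1)
    by (intro measurable_vimage_algebra1 restrict_family_funcset)
  from measurable_compose[OF this measurable_component_singleton[OF assms(2)]] assms(2)
  show ?thesis by simp
qed

lemma measurable_generated_sigma_subset:
  assumes "\<And>k. k \<in> J' \<Longrightarrow> X k \<in> measurable M (D k)" "J \<subseteq> J'"
    and "f \<in> measurable (generated_sigma M D X J) K"
  shows "f \<in> measurable (generated_sigma M D X J') K"
proof -
  have "(\<lambda>\<omega>. restrict (\<lambda>k. X k \<omega>) J) \<in> measurable (generated_sigma M D X J') (PiM J D)"
    using assms(1,2) by (intro measurable_restrict measurable_generated_sigma_var) auto
  then have "(\<lambda>\<omega>. \<omega>) \<in> measurable (generated_sigma M D X J') (generated_sigma M D X J)"
    unfolding generated_sigma_def[of M D X J] by (intro measurable_vimage_algebra2) auto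
  from measurable_compose[OF this assms(3)] show ?thesis by simp
qed

lemma measurable_generated_sigma_imp_measurable:
  assumes "\<And>k. k \<in> J \<Longrightarrow> X k \<in> measurable M (D k)"
    and "f \<in> measurable (generated_sigma M D X J) K"
  shows "f \<in> measurable M K"
proof -
  have "(\<lambda>\<omega>. \<omega>) \<in> measurable M (generated_sigma M D X J)"
    unfolding generated_sigma_def using assms(1)
    by (intro measurable_vimage_algebra2 measurable_restrict) auto
  from measurable_compose[OF this assms(2)] show ?thesis by simp
qed

lemma (in prob_space) distr_pair_eq_pair_measure:
  assumes X: "X \<in> measurable M S" and Y: "Y \<in> measurable M T"
    and rect: "\<And>A B. A \<in> sets S \<Longrightarrow> B \<in> sets T \<Longrightarrow>
      prob ((\<lambda>\<omega>. (X \<omega>, Y \<omega>)) -` (A \<times> B) \<inter> space M) = prob (X -` A \<inter> space M) * prob (Y -` B \<inter> space M)"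
  shows "distr M (S \<Otimes>\<^sub>M T) (\<lambda>\<omega>. (X \<omega>, Y \<omega>)) = distr M S X \<Otimes>\<^sub>M distr M T Y"
proof -
  have XY: "(\<lambda>\<omega>. (X \<omega>, Y \<omega>)) \<in> measurable M (S \<Otimes>\<^sub>M T)"
    using X Y by (rule measurable_Pair)
  interpret PX: prob_space "distr M S X" using X by (rule prob_space_distr)
  interpret PY: prob_space "distr M T Y" using Y by (rule prob_space_distr)
  have "distr M S X \<Otimes>\<^sub>M distr M T Y = distr M (S \<Otimes>\<^sub>M T) (\<lambda>\<omega>. (X \<omega>, Y \<omega>))"
  proof (rule pair_measure_eqI)
    show "sigma_finite_measure (distr M S X)" "sigma_finite_measure (distr M T Y)" ..
    fix A B assume A: "A \<in> sets (distr M S X)" and B: "B \<in> sets (distr M T Y)"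
    have "emeasure (distr M (S \<Otimes>\<^sub>M T) (\<lambda>\<omega>. (X \<omega>, Y \<omega>))) (A \<times> B)
        = emeasure M ((\<lambda>\<omega>. (X \<omega>, Y \<omega>)) -` (A \<times> B) \<inter> space M)"
      using A B by (intro emeasure_distr[OF XY]) auto
    also have "\<dots> = emeasure M (X -` A \<inter> space M) * emeasure M (Y -` B \<inter> space M)"
      using rect[of A B] A B by (simp add: emeasure_eq_measure measure_nonneg ennreal_mult)
    also have "\<dots> = emeasure (distr M S X) A * emeasure (distr M T Y) B"
      using X Y A B by (simp add: emeasure_distr)
    finally show "emeasure (distr M S X) A * emeasure (distr M T Y) B
        = emeasure (distr M (S \<Otimes>\<^sub>M T) (\<lambda>\<omega>. (X \<omega>, Y \<omega>))) (A \<times> B)" ..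
  qed simp
  then show ?thesis ..
qed

lemma (in prob_space) distr_pair_generated_sigma:
  assumes ind: "indep_vars D X I" and J: "J \<subseteq> I" and k: "k \<in> I" "k \<notin> J"
    and f: "f \<in> measurable (generated_sigma M D X J) K"
  shows "distr M (K \<Otimes>\<^sub>M D k) (\<lambda>\<omega>. (f \<omega>, X k \<omega>)) = distr M K f \<Otimes>\<^sub>M distr M (D k) (X k)"
proof -
  have Xm: "\<And>k. k \<in> I \<Longrightarrow> X k \<in> measurable M (D k)"
    using ind by (auto simp: indep_vars_def)
  let ?past = "\<lambda>\<omega>. restrict (\<lambda>k. X k \<omega>) J" and ?now = "\<lambda>\<omega>. restrict (\<lambda>k. X k \<omega>) {k}"
  have ind_past: "indep_var (PiM J D) ?past (PiM {k} D) ?now"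
    using J k by (intro indep_var_restrict[OF ind]) auto
  show ?thesis
  proof (rule distr_pair_eq_pair_measure)
    show "f \<in> measurable M K"
      using J Xm by (intro measurable_generated_sigma_imp_measurable[OF _ f]) auto
    show "X k \<in> measurable M (D k)" using Xm k by blast
    fix A B assume A: "A \<in> sets K" and B: "B \<in> sets (D k)"
    have past: "?past \<in> space M \<rightarrow> space (PiM J D)"
      using J Xm by (intro restrict_family_funcset) auto
    have "f -` A \<inter> space M \<in> sets (vimage_algebra (space M) ?past (PiM J D))"
      using measurable_sets[OF f A] by (simp add: generated_sigma_def)
    then obtain A' where A': "A' \<in> sets (PiM J D)" "f -` A \<inter> space M = ?past -` A' \<inter> space M"
      unfolding sets_vimage_algebra2[OF past] by blast
    define B' where "B' = (\<lambda>g. g k) -` B \<inter> space (PiM {k} D)"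
    have B': "B' \<in> sets (PiM {k} D)"
      unfolding B'_def using B by (intro measurable_sets[OF measurable_component_singleton]) auto
    have "?now \<omega> \<in> space (PiM {k} D)" if "\<omega> \<in> space M" for \<omega>
      using measurable_space[OF Xm[OF k(1)] that] by (simp add: space_PiM)
    then have now: "X k -` B \<inter> space M = ?now -` B' \<inter> space M"
      unfolding B'_def by auto
    have "(\<lambda>\<omega>. (f \<omega>, X k \<omega>)) -` (A \<times> B) \<inter> space M = (f -` A \<inter> space M) \<inter> (X k -` B \<inter> space M)"
      by auto
    also have "\<dots> = (\<lambda>\<omega>. (?past \<omega>, ?now \<omega>)) -` (A' \<times> B') \<inter> space M"
      unfolding A'(2) now by auto
    finally have "(\<lambda>\<omega>. (f \<omega>, X k \<omega>)) -` (A \<times> B) \<inter> space M = (\<lambda>\<omega>. (?past \<omega>, ?now \<omega>)) -` (A' \<times> B') \<inter> space M" .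
    then show "prob ((\<lambda>\<omega>. (f \<omega>, X k \<omega>)) -` (A \<times> B) \<inter> space M)
        = prob (f -` A \<inter> space M) * prob (X k -` B \<inter> space M)"
      using indep_varD[OF ind_past A'(1) B'] A'(2) now by simp
  qed
qed

text \<open>Independence of \<open>X\<close> and \<open>Y\<close> is stated through their joint distribution, because
  \<^const>\<open>prob_space.indep_var\<close> requires both variables to have the same codomain type.\<close>
lemma (in prob_space) nn_integral_indep_le:
  assumes X: "X \<in> measurable M S" and Y: "Y \<in> measurable M T"
    and prod: "distr M (S \<Otimes>\<^sub>M T) (\<lambda>\<omega>. (X \<omega>, Y \<omega>)) = distr M S X \<Otimes>\<^sub>M distr M T Y"
    and f: "f \<in> borel_measurable (S \<Otimes>\<^sub>M T)"
    and g: "g \<in> borel_measurable S"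
    and bound: "\<And>x. x \<in> space S \<Longrightarrow> (\<integral>\<^sup>+y. f (x, y) \<partial>distr M T Y) \<le> g x"
  shows "(\<integral>\<^sup>+\<omega>. f (X \<omega>, Y \<omega>) \<partial>M) \<le> (\<integral>\<^sup>+\<omega>. g (X \<omega>) \<partial>M)"
proof -
  interpret PX: prob_space "distr M S X" using X by (rule prob_space_distr)
  interpret PY: prob_space "distr M T Y" using Y by (rule prob_space_distr)
  have "sets (distr M S X \<Otimes>\<^sub>M distr M T Y) = sets (S \<Otimes>\<^sub>M T)"
    by (intro sets_pair_measure_cong) auto
  then have f': "f \<in> borel_measurable (distr M S X \<Otimes>\<^sub>M distr M T Y)"
    using f by (simp cong: measurable_cong_sets)
  have "(\<integral>\<^sup>+\<omega>. f (X \<omega>, Y \<omega>) \<partial>M) = (\<integral>\<^sup>+p. f p \<partial>(distr M S X \<Otimes>\<^sub>M distr M T Y))"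
    using X Y f by (simp add: prod[symmetric] nn_integral_distr)
  also have "\<dots> = (\<integral>\<^sup>+x. \<integral>\<^sup>+y. f (x, y) \<partial>distr M T Y \<partial>distr M S X)"
    using f' by (rule PY.nn_integral_fst[symmetric])
  also have "\<dots> \<le> (\<integral>\<^sup>+x. g x \<partial>distr M S X)"
    using bound by (intro nn_integral_mono) simp
  also have "\<dots> = (\<integral>\<^sup>+\<omega>. g (X \<omega>) \<partial>M)"
    using X g by (simp add: nn_integral_distr)
  finally show ?thesis .
qed

lemma (in prob_space) nn_integral_norm_add_centered_sq_le:
  fixes W :: "'a \<Rightarrow> 'b::euclidean_space"
  assumes W: "integrable M W" "expectation W = 0"
    and var: "(\<integral>\<^sup>+\<omega>. ennreal ((norm (W \<omega>))\<^sup>2) \<partial>M) \<le> ennreal s"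
  shows "(\<integral>\<^sup>+\<omega>. ennreal ((norm (a + W \<omega>))\<^sup>2) \<partial>M) \<le> ennreal ((norm a)\<^sup>2) + ennreal s"
proof -
  have sq_int: "integrable M (\<lambda>\<omega>. (norm (W \<omega>))\<^sup>2)"
    using var W by (intro integrableI_bounded) (auto simp: order_le_less_trans)
  have expand: "(norm (a + W \<omega>))\<^sup>2 = (norm a)\<^sup>2 + 2 * (a \<bullet> W \<omega>) + (norm (W \<omega>))\<^sup>2" for \<omega>
    by (simp add: power2_norm_eq_inner inner_add_left inner_add_right inner_commute)
  have "integrable M (\<lambda>\<omega>. (norm (a + W \<omega>))\<^sup>2)"
    using W sq_int unfolding expand by auto
  then have "(\<integral>\<^sup>+\<omega>. ennreal ((norm (a + W \<omega>))\<^sup>2) \<partial>M) = ennreal (\<integral>\<omega>. (norm (a + W \<omega>))\<^sup>2 \<partial>M)"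
    by (rule nn_integral_eq_integral) simp
  also have "(\<integral>\<omega>. (norm (a + W \<omega>))\<^sup>2 \<partial>M) = (norm a)\<^sup>2 + (\<integral>\<omega>. (norm (W \<omega>))\<^sup>2 \<partial>M)"
    using W sq_int unfolding expand by (simp add: prob_space)
  also have "ennreal \<dots> = ennreal ((norm a)\<^sup>2) + (\<integral>\<^sup>+\<omega>. ennreal ((norm (W \<omega>))\<^sup>2) \<partial>M)"
    using sq_int by (simp add: ennreal_plus nn_integral_eq_integral)
  finally show ?thesis using var by (simp add: add_left_mono)
qed

lemma ennreal_mean_le:
  fixes Z W :: "'i \<Rightarrow> ennreal"
  assumes A: "finite A" "A \<noteq> {}" and le: "\<And>i. i \<in> A \<Longrightarrow> Z i \<le> c + W i"
  shows "ennreal (1 / real (card A)) * (\<Sum>i\<in>A. Z i) \<le> c + ennreal (1 / real (card A)) * (\<Sum>i\<in>A. W i)"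
proof -
  have "(\<Sum>i\<in>A. Z i) \<le> (\<Sum>i\<in>A. c + W i)"
    using le by (intro sum_mono) auto
  then have "ennreal (1 / real (card A)) * (\<Sum>i\<in>A. Z i)
      \<le> ennreal (1 / real (card A)) * (of_nat (card A) * c + (\<Sum>i\<in>A. W i))"
    by (intro mult_left_mono) (simp_all add: sum.distrib)
  also have "ennreal (1 / real (card A)) * of_nat (card A) = 1"
    using A by (simp add: ennreal_of_nat_eq_real_of_nat flip: ennreal_mult)
  then have "ennreal (1 / real (card A)) * (of_nat (card A) * c + (\<Sum>i\<in>A. W i))
      = c + ennreal (1 / real (card A)) * (\<Sum>i\<in>A. W i)"
    by (simp add: distrib_left mult.assoc[symmetric])
  finally show ?thesis .
qed

lemma sum_lessThan_le_first_plus_rest: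
  fixes a b :: "nat \<Rightarrow> ennreal"
  assumes "E \<ge> 1" and "a 0 \<le> A" and "\<And>e. Suc e < E \<Longrightarrow> a (Suc e) \<le> B + b e"
  shows "(\<Sum>e<E. a e) \<le> A + of_nat E * B + (\<Sum>e<E. b e)"
proof -
  obtain E' where E: "E = Suc E'" using assms(1) by (cases E) auto
  have "(\<Sum>e<E. a e) = a 0 + (\<Sum>e<E'. a (Suc e))"
    unfolding E by (rule sum.lessThan_Suc_shift)
  also have "\<dots> \<le> A + (\<Sum>e<E'. B + b e)"
    using assms(2,3) E by (intro add_mono sum_mono) auto
  also have "\<dots> \<le> A + of_nat E * B + (\<Sum>e<E. b e)"
    unfolding E by (simp add: sum.distrib add.assoc add_mono distrib_right)
  finally show ?thesis .
qed

lemma sum_mean_le_of_epoch_bounds: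
  fixes Z Q T :: "nat \<Rightarrow> nat \<Rightarrow> ennreal"
  assumes N: "N \<ge> 1" and E: "E \<ge> 1"
    and first: "\<And>j. j < N \<Longrightarrow> Z 0 j \<le> ennreal s"
    and step: "\<And>e j. Suc e < E \<Longrightarrow> j < N \<Longrightarrow>
      Z (Suc e) j \<le> ennreal r + K * (ennreal (1 / real H) * Q e j) + K * T e j"
  shows "(\<Sum>e<E. ennreal (1 / real N) * (\<Sum>j<N. Z e j))
    \<le> K * (\<Sum>e<E. ennreal (1 / (real N * real H)) * (\<Sum>j<N. Q e j))
      + K * (\<Sum>e<E. ennreal (1 / real N) * (\<Sum>j<N. T e j)) + of_nat E * ennreal r + ennreal s"
proof -
  define q where "q e = ennreal (1 / (real N * real H)) * (\<Sum>j<N. Q e j)" for e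
  define th where "th e = ennreal (1 / real N) * (\<Sum>j<N. T e j)" for e
  have NH: "ennreal (1 / (real N * real H)) = ennreal (1 / real N) * ennreal (1 / real H)"
    by (simp flip: ennreal_mult)
  have N_ne: "{..<N} \<noteq> {}" using N by (auto simp: lessThan_empty_iff)
  have "ennreal (1 / real N) * (\<Sum>j<N. Z 0 j) \<le> ennreal s + ennreal (1 / real N) * (\<Sum>j<N. 0)"
    using ennreal_mean_le[of "{..<N}" "Z 0" "ennreal s" "\<lambda>_. 0"] first N_ne by simp
  then have "ennreal (1 / real N) * (\<Sum>j<N. Z 0 j) \<le> ennreal s" by simp
  moreover have "ennreal (1 / real N) * (\<Sum>j<N. Z (Suc e) j) \<le> ennreal r + (K * q e + K * th e)"
    if "Suc e < E" for e
  proof -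
    have "ennreal (1 / real N) * (\<Sum>j<N. Z (Suc e) j)
        \<le> ennreal r + ennreal (1 / real N) * (\<Sum>j<N. K * (ennreal (1 / real H) * Q e j) + K * T e j)"
      using ennreal_mean_le[of "{..<N}" "Z (Suc e)"] step[OF that] N_ne by (simp add: add.assoc)
    also have "ennreal (1 / real N) * (\<Sum>j<N. K * (ennreal (1 / real H) * Q e j) + K * T e j)
        = K * q e + K * th e"
      unfolding q_def th_def NH by (simp add: sum.distrib sum_distrib_left distrib_left ac_simps)
    finally show ?thesis .
  qed
  ultimately have "(\<Sum>e<E. ennreal (1 / real N) * (\<Sum>j<N. Z e j))
      \<le> ennreal s + of_nat E * ennreal r + (\<Sum>e<E. K * q e + K * th e)"
    using E by (intro sum_lessThan_le_first_plus_rest) auto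
  then show ?thesis
    by (simp add: q_def th_def sum.distrib sum_distrib_left ac_simps)
qed

section \<open>The MTGC iterates\<close>

locale mtgc = prob_space M for M :: "'w measure" +
  fixes N :: nat and C :: "nat \<Rightarrow> nat set"
    and D :: "nat \<Rightarrow> 's measure"
    and G :: "nat \<Rightarrow> 'a::euclidean_space \<Rightarrow> 's \<Rightarrow> 'a"
    and gF :: "nat \<Rightarrow> 'a \<Rightarrow> 'a"
    and L \<sigma> \<gamma> :: real and E H :: nat
    and \<xi> :: "nat \<Rightarrow> nat \<Rightarrow> nat \<Rightarrow> nat \<Rightarrow> 'w \<Rightarrow> 's"
    and x0 :: 'a
    and xbar :: "nat \<Rightarrow> 'w \<Rightarrow> 'a"
    and y :: "nat \<Rightarrow> nat \<Rightarrow> 'w \<Rightarrow> 'a"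
    and xg :: "nat \<Rightarrow> nat \<Rightarrow> nat \<Rightarrow> 'w \<Rightarrow> 'a"
    and z :: "nat \<Rightarrow> nat \<Rightarrow> nat \<Rightarrow> 'w \<Rightarrow> 'a"
    and x :: "nat \<Rightarrow> nat \<Rightarrow> nat \<Rightarrow> nat \<Rightarrow> 'w \<Rightarrow> 'a"
  assumes C_fin: "\<And>j. j < N \<Longrightarrow> finite (C j)"
    and C_ne: "\<And>j. j < N \<Longrightarrow> C j \<noteq> {}"
    and D_prob: "\<And>j i. j < N \<Longrightarrow> i \<in> C j \<Longrightarrow> prob_space (D i)"
    and G_meas: "\<And>j i. j < N \<Longrightarrow> i \<in> C j \<Longrightarrow>
        (\<lambda>(v, s). G i v s) \<in> borel_measurable (borel \<Otimes>\<^sub>M D i)"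
    and A1: "\<And>j i u v. j < N \<Longrightarrow> i \<in> C j \<Longrightarrow> norm (gF i u - gF i v) \<le> L * norm (u - v)"
    and A2_int: "\<And>j i v. j < N \<Longrightarrow> i \<in> C j \<Longrightarrow> integrable (D i) (G i v)"
    and A2_unb: "\<And>j i v. j < N \<Longrightarrow> i \<in> C j \<Longrightarrow> (\<integral>s. G i v s \<partial>D i) = gF i v"
    and A2_var: "\<And>j i v. j < N \<Longrightarrow> i \<in> C j \<Longrightarrow>
        (\<integral>\<^sup>+ s. ennreal ((norm (G i v s - gF i v))\<^sup>2) \<partial>D i) \<le> ennreal (\<sigma>\<^sup>2)"
    and E_pos: "E \<ge> 1" and H_pos: "H \<ge> 1" and \<gamma>_pos: "\<gamma> > 0"
    and \<xi>_indep: "indep_vars (\<lambda>(i, tt, e, h). D i) (\<lambda>(i, tt, e, h). \<xi> i tt e h)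
        {(i, tt, e, h). i \<in> (\<Union>j<N. C j) \<and> e < E \<and> h < H}"
    and \<xi>_distr: "\<And>j i tt e h. j < N \<Longrightarrow> i \<in> C j \<Longrightarrow> e < E \<Longrightarrow> h < H \<Longrightarrow>
        distr M (D i) (\<xi> i tt e h) = D i"
    and y_init: "\<And>j \<omega>. j < N \<Longrightarrow> y j 0 \<omega> =
        - ((1 / real (card (C j))) *\<^sub>R (\<Sum>i\<in>C j. G i x0 (\<xi> i 0 0 0 \<omega>)))
        + (1 / real N) *\<^sub>R (\<Sum>j'<N. (1 / real (card (C j'))) *\<^sub>R (\<Sum>i\<in>C j'. G i x0 (\<xi> i 0 0 0 \<omega>)))"
    and xbar_init: "\<And>\<omega>. xbar 0 \<omega> = x0"
    and xg_0: "\<And>j tt \<omega>. j < N \<Longrightarrow> xg j tt 0 \<omega> = xbar tt \<omega>"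
    and z_0: "\<And>j i tt \<omega>. j < N \<Longrightarrow> i \<in> C j \<Longrightarrow> z i tt 0 \<omega> =
        - G i (xbar tt \<omega>) (\<xi> i tt 0 0 \<omega>)
        + (1 / real (card (C j))) *\<^sub>R (\<Sum>i'\<in>C j. G i' (xbar tt \<omega>) (\<xi> i' tt 0 0 \<omega>))"
    and x_0: "\<And>j i tt e \<omega>. j < N \<Longrightarrow> i \<in> C j \<Longrightarrow> e < E \<Longrightarrow> x i tt e 0 \<omega> = xg j tt e \<omega>"
    and x_step: "\<And>j i tt e h \<omega>. j < N \<Longrightarrow> i \<in> C j \<Longrightarrow> e < E \<Longrightarrow> h < H \<Longrightarrow>
        x i tt e (Suc h) \<omega> = x i tt e h \<omega>
          - \<gamma> *\<^sub>R (G i (x i tt e h \<omega>) (\<xi> i tt e h \<omega>) + z i tt e \<omega> + y j tt \<omega>)"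
    and xg_step: "\<And>j tt e \<omega>. j < N \<Longrightarrow> e < E \<Longrightarrow>
        xg j tt (Suc e) \<omega> = (1 / real (card (C j))) *\<^sub>R (\<Sum>i\<in>C j. x i tt e H \<omega>)"
    and z_step: "\<And>j i tt e \<omega>. j < N \<Longrightarrow> i \<in> C j \<Longrightarrow> e < E \<Longrightarrow>
        z i tt (Suc e) \<omega> = z i tt e \<omega> + (1 / (real H * \<gamma>)) *\<^sub>R (x i tt e H \<omega> - xg j tt (Suc e) \<omega>)"
    and xbar_step: "\<And>tt \<omega>. xbar (Suc tt) \<omega> = (1 / real N) *\<^sub>R (\<Sum>j<N. xg j tt E \<omega>)"
    and y_step: "\<And>j tt \<omega>. j < N \<Longrightarrow>
        y j (Suc tt) \<omega> = y j tt \<omega> + (1 / (real H * real E * \<gamma>)) *\<^sub>R (xg j tt E \<omega> - xbar (Suc tt) \<omega>)"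
begin

definition samples :: "(nat \<times> nat \<times> nat \<times> nat) set" where
  "samples = {(i, tt, e, h). i \<in> (\<Union>j<N. C j) \<and> e < E \<and> h < H}"

abbreviation sample_law :: "nat \<times> nat \<times> nat \<times> nat \<Rightarrow> 's measure" where
  "sample_law \<equiv> \<lambda>(i, tt, e, h). D i"

abbreviation sample :: "nat \<times> nat \<times> nat \<times> nat \<Rightarrow> 'w \<Rightarrow> 's" where
  "sample \<equiv> \<lambda>(i, tt, e, h). \<xi> i tt e h"

definition clock :: "nat \<Rightarrow> nat \<Rightarrow> nat \<Rightarrow> nat" where
  "clock tt e h = (tt * E + e) * H + h"

definition past :: "nat \<Rightarrow> 'w measure" where
  "past n = generated_sigma M sample_law sample {(i, tt, e, h) \<in> samples. clock tt e h < n}"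

lemma \<xi>_measurable: "j < N \<Longrightarrow> i \<in> C j \<Longrightarrow> e < E \<Longrightarrow> h < H \<Longrightarrow> \<xi> i tt e h \<in> measurable M (D i)"
  using \<xi>_indep unfolding indep_vars_def by fastforce

lemma measurable_past_\<xi>:
  assumes "j < N" "i \<in> C j" "e < E" "h < H" "clock tt e h < n"
  shows "\<xi> i tt e h \<in> measurable (past n) (D i)"
proof -
  have "sample (i, tt, e, h) \<in> measurable (past n) (sample_law (i, tt, e, h))"
    unfolding past_def using assms
    by (intro measurable_generated_sigma_var) (auto simp: samples_def intro: \<xi>_measurable)
  then show ?thesis by simp
qed

lemma measurable_past_mono: "f \<in> measurable (past n) K \<Longrightarrow> n \<le> m \<Longrightarrow> f \<in> measurable (past m) K"
  unfolding past_def
  by (erule measurable_generated_sigma_subset[rotated 2]) (auto simp: samples_def intro: \<xi>_measurable)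

lemma measurable_past_imp_measurable: "f \<in> measurable (past n) K \<Longrightarrow> f \<in> measurable M K"
  unfolding past_def
  by (erule measurable_generated_sigma_imp_measurable[rotated]) (auto simp: samples_def intro: \<xi>_measurable)

lemma distr_pair_past_\<xi>:
  assumes "j < N" "i \<in> C j" "e < E" "h < H" and f: "f \<in> measurable (past (clock tt e h)) K"
  shows "distr M (K \<Otimes>\<^sub>M D i) (\<lambda>\<omega>. (f \<omega>, \<xi> i tt e h \<omega>)) = distr M K f \<Otimes>\<^sub>M distr M (D i) (\<xi> i tt e h)"
proof -
  have "distr M (K \<Otimes>\<^sub>M sample_law (i, tt, e, h)) (\<lambda>\<omega>. (f \<omega>, sample (i, tt, e, h) \<omega>))
      = distr M K f \<Otimes>\<^sub>M distr M (sample_law (i, tt, e, h)) (sample (i, tt, e, h))"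
  proof (rule distr_pair_generated_sigma[OF \<xi>_indep[folded samples_def]])
    show "(i, tt, e, h) \<in> samples" using assms by (auto simp: samples_def)
  qed (use f in \<open>auto simp: past_def\<close>)
  then show ?thesis by simp
qed

lemma card_C_pos: "j < N \<Longrightarrow> real (card (C j)) > 0"
  using C_fin C_ne by (simp add: card_gt_0_iff)

lemma gF_borel: "j < N \<Longrightarrow> i \<in> C j \<Longrightarrow> gF i \<in> borel_measurable borel"
proof -
  assume j: "j < N" "i \<in> C j"
  have "norm (gF i u - gF i v) \<le> \<bar>L\<bar> * norm (u - v)" for u v
    using A1[OF j, of u v] by (smt (verit) mult_right_mono norm_ge_zero)
  then have "\<bar>L\<bar>-lipschitz_on UNIV (gF i)"
    by (intro lipschitz_onI) (auto simp: dist_norm)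
  then show ?thesis
    by (intro borel_measurable_continuous_onI lipschitz_on_continuous_on)
qed

lemma measurable_G_comp:
  "j < N \<Longrightarrow> i \<in> C j \<Longrightarrow> X \<in> borel_measurable K \<Longrightarrow> Y \<in> measurable K (D i) \<Longrightarrow>
    (\<lambda>\<omega>. G i (X \<omega>) (Y \<omega>)) \<in> borel_measurable K"
  using measurable_compose[OF measurable_Pair G_meas] by simp

lemma clock_Suc [simp]: "clock tt e (Suc h) = Suc (clock tt e h)"
  by (simp add: clock_def)

lemma clock_le_iff [simp]: "clock tt e h \<le> clock tt e h' \<longleftrightarrow> h \<le> h'"
  by (simp add: clock_def)

lemma clock_less_iff [simp]: "clock tt e h < clock tt e h' \<longleftrightarrow> h < h'"
  by (simp add: clock_def)

lemma clock_round_start_le: "clock tt 0 0 \<le> clock tt e h"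
  by (simp add: clock_def add_mult_distrib trans_le_add1)

lemma clock_next_epoch: "e < e' \<Longrightarrow> h \<le> H \<Longrightarrow> clock tt e h \<le> clock tt e' h'"
proof -
  assume "e < e'" "h \<le> H"
  then have "(tt * E + e) * H + h \<le> (tt * E + e + 1) * H" by simp
  also have "\<dots> \<le> (tt * E + e') * H" using \<open>e < e'\<close> by (intro mult_right_mono) auto
  finally show ?thesis by (simp add: clock_def)
qed

lemma clock_next_round: "clock tt E 0 = clock (Suc tt) 0 0"
  by (simp add: clock_def)

lemma x_adapted_in_epoch:
  assumes j: "j < N" "i \<in> C j" and e: "e < E"
    and xg: "xg j tt e \<in> borel_measurable (past (clock tt e 0))"
    and z: "z i tt e \<in> borel_measurable (past (clock tt e 0 + 1))"
    and y: "y j tt \<in> borel_measurable (past (clock tt 0 0 + 1))"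
  shows "h \<le> H \<Longrightarrow> x i tt e h \<in> borel_measurable (past (clock tt e h))"
proof (induction h)
  case 0
  have "x i tt e 0 = xg j tt e" using x_0[OF j e] by auto
  then show ?case using xg by simp
next
  case (Suc h)
  let ?F = "past (clock tt e (Suc h))"
  have h: "h < H" using Suc.prems by simp
  have "x i tt e h \<in> borel_measurable ?F"
    using measurable_past_mono[OF Suc.IH] h by simp
  moreover have "\<xi> i tt e h \<in> measurable ?F (D i)"
    using j e h by (intro measurable_past_\<xi>) auto
  moreover have "z i tt e \<in> borel_measurable ?F" "y j tt \<in> borel_measurable ?F"
    using measurable_past_mono[OF z] measurable_past_mono[OF y] clock_round_start_le[of tt e h] by auto
  moreover have "x i tt e (Suc h) = (\<lambda>\<omega>. x i tt e h \<omega>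
      - \<gamma> *\<^sub>R (G i (x i tt e h \<omega>) (\<xi> i tt e h \<omega>) + z i tt e \<omega> + y j tt \<omega>))"
    using x_step[OF j e h] by auto
  ultimately show ?case
    by (simp add: borel_measurable_diff borel_measurable_scaleR borel_measurable_add measurable_G_comp[OF j])
qed

lemma z_init_adapted:
  assumes xbar: "xbar tt \<in> borel_measurable (past (clock tt 0 0))" and j: "j < N" "i \<in> C j"
  shows "z i tt 0 \<in> borel_measurable (past (clock tt 0 0 + 1))"
proof -
  have "(\<lambda>\<omega>. G k (xbar tt \<omega>) (\<xi> k tt 0 0 \<omega>)) \<in> borel_measurable (past (clock tt 0 0 + 1))" if "k \<in> C j" for k
    using that j E_pos H_pos measurable_past_mono[OF xbar]
    by (intro measurable_G_comp measurable_past_\<xi>) auto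
  moreover have "z i tt 0 = (\<lambda>\<omega>. - G i (xbar tt \<omega>) (\<xi> i tt 0 0 \<omega>)
      + (1 / real (card (C j))) *\<^sub>R (\<Sum>k\<in>C j. G k (xbar tt \<omega>) (\<xi> k tt 0 0 \<omega>)))"
    using z_0[OF j] by auto
  ultimately show ?thesis
    using j by (simp add: borel_measurable_diff borel_measurable_scaleR borel_measurable_sum)
qed

lemma y_init_adapted:
  assumes j: "j < N"
  shows "y j 0 \<in> borel_measurable (past (clock 0 0 0 + 1))"
proof -
  have "(\<lambda>\<omega>. G i x0 (\<xi> i 0 0 0 \<omega>)) \<in> borel_measurable (past (clock 0 0 0 + 1))" if "j' < N" "i \<in> C j'" for i j'
    using that E_pos H_pos by (intro measurable_G_comp measurable_past_\<xi>) auto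
  moreover have "y j 0 = (\<lambda>\<omega>. - ((1 / real (card (C j))) *\<^sub>R (\<Sum>i\<in>C j. G i x0 (\<xi> i 0 0 0 \<omega>)))
    + (1 / real N) *\<^sub>R (\<Sum>j'<N. (1 / real (card (C j'))) *\<^sub>R (\<Sum>i\<in>C j'. G i x0 (\<xi> i 0 0 0 \<omega>))))"
    using y_init[OF j] by auto
  ultimately show ?thesis
    using j by (simp only:) (intro borel_measurable_add borel_measurable_uminus
        borel_measurable_scaleR borel_measurable_const borel_measurable_sum; auto)
qed

lemma epoch_adapted:
  assumes xbar: "xbar tt \<in> borel_measurable (past (clock tt 0 0))"
    and y: "\<And>j. j < N \<Longrightarrow> y j tt \<in> borel_measurable (past (clock tt 0 0 + 1))"
  shows "e \<le> E \<Longrightarrow> (\<forall>j<N. xg j tt e \<in> borel_measurable (past (clock tt e 0))) \<and>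
    (\<forall>j<N. \<forall>i\<in>C j. z i tt e \<in> borel_measurable (past (clock tt e 0 + 1)))"
proof (induction e)
  case 0
  have "xg j tt 0 = xbar tt" if "j < N" for j
    using xg_0[OF that] by auto
  with xbar z_init_adapted[OF xbar] show ?case by simp
next
  case (Suc e)
  then have e: "e < E" by simp
  let ?F = "past (clock tt (Suc e) 0)"
  have IH: "xg j tt e \<in> borel_measurable (past (clock tt e 0))"
      "z i tt e \<in> borel_measurable (past (clock tt e 0 + 1))" if "j < N" "i \<in> C j" for i j
    using Suc e that by auto
  have xH: "x i tt e H \<in> borel_measurable ?F" if j: "j < N" "i \<in> C j" for i j
    using measurable_past_mono[OF x_adapted_in_epoch[OF j e IH[OF j] y[OF j(1)] order_refl]]
      clock_next_epoch[of e "Suc e" H tt 0] by simp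
  have xg_Suc: "xg j tt (Suc e) = (\<lambda>\<omega>. (1 / real (card (C j))) *\<^sub>R (\<Sum>i\<in>C j. x i tt e H \<omega>))" if "j < N" for j
    using xg_step[OF that e] by auto
  have xg: "xg j tt (Suc e) \<in> borel_measurable ?F" if "j < N" for j
    using xH[OF that] by (simp add: xg_Suc[OF that] borel_measurable_scaleR borel_measurable_sum)
  have "z i tt (Suc e) \<in> borel_measurable (past (clock tt (Suc e) 0 + 1))" if j: "j < N" "i \<in> C j" for i j
  proof -
    have "z i tt (Suc e) = (\<lambda>\<omega>. z i tt e \<omega> + (1 / (real H * \<gamma>)) *\<^sub>R (x i tt e H \<omega> - xg j tt (Suc e) \<omega>))"
      using z_step[OF j e] by auto
    moreover have "z i tt e \<in> borel_measurable (past (clock tt (Suc e) 0 + 1))"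
      using measurable_past_mono[OF IH(2)[OF j]] clock_next_epoch[of e "Suc e" 0 tt 0] by simp
    moreover have "x i tt e H \<in> borel_measurable (past (clock tt (Suc e) 0 + 1))"
      "xg j tt (Suc e) \<in> borel_measurable (past (clock tt (Suc e) 0 + 1))"
      using measurable_past_mono[OF xH[OF j]] measurable_past_mono[OF xg[OF j(1)]] by auto
    ultimately show ?thesis by (simp add: borel_measurable_add borel_measurable_diff borel_measurable_scaleR)
  qed
  with xg show ?case by simp
qed

lemma round_adapted:
  "xbar tt \<in> borel_measurable (past (clock tt 0 0)) \<and>
    (\<forall>j<N. y j tt \<in> borel_measurable (past (clock tt 0 0 + 1)))"
proof (induction tt)
  case 0
  have "xbar 0 = (\<lambda>\<omega>. x0)" using xbar_init by auto
  with y_init_adapted show ?case by simp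
next
  case (Suc tt)
  let ?F = "past (clock (Suc tt) 0 0)"
  have xgE: "xg j tt E \<in> borel_measurable ?F" if "j < N" for j
    using epoch_adapted[of tt E] Suc that by (simp add: clock_next_round)
  have xbar_Suc: "xbar (Suc tt) = (\<lambda>\<omega>. (1 / real N) *\<^sub>R (\<Sum>j<N. xg j tt E \<omega>))"
    using xbar_step by auto
  have xbar: "xbar (Suc tt) \<in> borel_measurable ?F"
    using xgE by (simp add: xbar_Suc borel_measurable_scaleR borel_measurable_sum)
  have "y j (Suc tt) \<in> borel_measurable (past (clock (Suc tt) 0 0 + 1))" if j: "j < N" for j
  proof -
    have "y j (Suc tt) = (\<lambda>\<omega>. y j tt \<omega> + (1 / (real H * real E * \<gamma>)) *\<^sub>R (xg j tt E \<omega> - xbar (Suc tt) \<omega>))"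
      using y_step[OF j] by auto
    moreover have "y j tt \<in> borel_measurable (past (clock (Suc tt) 0 0 + 1))"
      using Suc j clock_round_start_le[of tt E 0]
      by (auto simp: clock_next_round intro: measurable_past_mono[of _ "clock tt 0 0 + 1"])
    moreover have "xg j tt E \<in> borel_measurable (past (clock (Suc tt) 0 0 + 1))"
      "xbar (Suc tt) \<in> borel_measurable (past (clock (Suc tt) 0 0 + 1))"
      using measurable_past_mono[OF xgE[OF j]] measurable_past_mono[OF xbar] by auto
    ultimately show ?thesis by (simp add: borel_measurable_add borel_measurable_diff borel_measurable_scaleR)
  qed
  with xbar show ?case by simp
qed

lemma y_adapted: "j < N \<Longrightarrow> y j tt \<in> borel_measurable (past (clock tt 0 0 + 1))"
  using round_adapted by blast

lemma xg_adapted: "j < N \<Longrightarrow> e \<le> E \<Longrightarrow> xg j tt e \<in> borel_measurable (past (clock tt e 0))"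
  using epoch_adapted[OF conjunct1[OF round_adapted] y_adapted] by blast

lemma z_adapted: "j < N \<Longrightarrow> i \<in> C j \<Longrightarrow> e \<le> E \<Longrightarrow> z i tt e \<in> borel_measurable (past (clock tt e 0 + 1))"
  using epoch_adapted[OF conjunct1[OF round_adapted] y_adapted] by blast

lemma x_adapted:
  "j < N \<Longrightarrow> i \<in> C j \<Longrightarrow> e < E \<Longrightarrow> h \<le> H \<Longrightarrow> x i tt e h \<in> borel_measurable (past (clock tt e h))"
  by (intro x_adapted_in_epoch xg_adapted z_adapted y_adapted) auto

lemma x_closed_form:
  assumes j: "j < N" "i \<in> C j" and e: "e < E"
  shows "h \<le> H \<Longrightarrow> x i tt e h \<omega> = xg j tt e \<omega>
    - \<gamma> *\<^sub>R ((\<Sum>h'<h. G i (x i tt e h' \<omega>) (\<xi> i tt e h' \<omega>)) + real h *\<^sub>R (z i tt e \<omega> + y j tt \<omega>))"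
proof (induction h)
  case 0
  then show ?case using x_0[OF j e] by simp
next
  case (Suc h)
  then have h: "h < H" by simp
  show ?case
    using h by (simp add: x_step[OF j e h] Suc.IH algebra_simps)
qed

lemma z_sum_zero: "j < N \<Longrightarrow> e \<le> E \<Longrightarrow> (\<Sum>i\<in>C j. z i tt e \<omega>) = 0"
proof (induction e)
  case 0
  then show ?case
    using card_C_pos[of j] by (simp add: z_0 sum_subtractf sum_constant_scaleR)
next
  case (Suc e)
  then have j: "j < N" and e: "e < E" by auto
  have "real (card (C j)) *\<^sub>R xg j tt (Suc e) \<omega> = (\<Sum>i\<in>C j. x i tt e H \<omega>)"
    using xg_step[OF j e] card_C_pos[OF j] by simp
  then show ?case
    using Suc z_step[OF j _ e]
    by (simp add: sum.distrib sum_subtractf sum_constant_scaleR flip: scaleR_sum_right)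
qed

lemma z_Suc_closed_form:
  assumes j: "j < N" "i \<in> C j" and e: "e < E"
  shows "z i tt (Suc e) \<omega> = - ((1 / real H) *\<^sub>R ((\<Sum>h<H. G i (x i tt e h \<omega>) (\<xi> i tt e h \<omega>))
    - (1 / real (card (C j))) *\<^sub>R (\<Sum>k\<in>C j. \<Sum>h<H. G k (x k tt e h \<omega>) (\<xi> k tt e h \<omega>))))"
proof -
  have "z i tt (Suc e) \<omega> = z i tt e \<omega> + (1 / (real H * \<gamma>)) *\<^sub>R (x i tt e H \<omega>
      - (1 / real (card (C j))) *\<^sub>R (\<Sum>k\<in>C j. x k tt e H \<omega>))"
    using z_step[OF j e] xg_step[OF j(1) e] by simp
  also have "\<dots> = - ((1 / real H) *\<^sub>R ((\<Sum>h<H. G i (x i tt e h \<omega>) (\<xi> i tt e h \<omega>))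
    - (1 / real (card (C j))) *\<^sub>R (\<Sum>k\<in>C j. \<Sum>h<H. G k (x k tt e h \<omega>) (\<xi> k tt e h \<omega>))))"
    using C_fin[OF j(1)] C_ne[OF j(1)] j H_pos \<gamma>_pos z_sum_zero[OF j(1)] e
      x_closed_form[OF j(1) _ e order_refl]
    by (intro correction_update_closed_form) auto
  finally show ?thesis .
qed

lemma gradient_noise_second_moment:
  assumes "j < N" "i \<in> C j"
  shows "(\<integral>\<^sup>+s. ennreal ((norm (a + (G i v s - gF i v)))\<^sup>2) \<partial>D i) \<le> ennreal ((norm a)\<^sup>2) + ennreal (\<sigma>\<^sup>2)"
proof -
  interpret Di: prob_space "D i" using D_prob[OF assms] .
  show ?thesis
    using A2_int[OF assms] A2_var[OF assms] A2_unb[OF assms]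
    by (intro Di.nn_integral_norm_add_centered_sq_le) (auto simp: Di.prob_space)
qed

lemma sqE_add_noise_le:
  assumes j: "j < N" "i \<in> C j" and eh: "e < E" "h < H"
    and S: "S \<in> borel_measurable (past (clock tt e h))" and X: "X \<in> borel_measurable (past (clock tt e h))"
  shows "sqE M (\<lambda>\<omega>. S \<omega> + (G i (X \<omega>) (\<xi> i tt e h \<omega>) - gF i (X \<omega>))) \<le> sqE M S + ennreal (\<sigma>\<^sup>2)"
proof -
  define f where "f q = ennreal ((norm (fst (fst q) + (G i (snd (fst q)) (snd q) - gF i (snd (fst q)))))\<^sup>2)"
    for q :: "('a \<times> 'a) \<times> 's"
  define g where "g p = ennreal ((norm (fst p))\<^sup>2) + ennreal (\<sigma>\<^sup>2)" for p :: "'a \<times> 'a"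
  have P: "(\<lambda>\<omega>. (S \<omega>, X \<omega>)) \<in> measurable (past (clock tt e h)) (borel \<Otimes>\<^sub>M borel)"
    using S X by (rule measurable_Pair)
  have "(\<lambda>q. G i (snd (fst q)) (snd q)) \<in> borel_measurable ((borel \<Otimes>\<^sub>M borel) \<Otimes>\<^sub>M D i)"
    by (rule measurable_G_comp[OF j]) measurable
  then have f: "f \<in> borel_measurable ((borel \<Otimes>\<^sub>M borel) \<Otimes>\<^sub>M D i)"
    unfolding f_def using gF_borel[OF j] by measurable
  have "sqE M (\<lambda>\<omega>. S \<omega> + (G i (X \<omega>) (\<xi> i tt e h \<omega>) - gF i (X \<omega>))) = (\<integral>\<^sup>+\<omega>. f ((S \<omega>, X \<omega>), \<xi> i tt e h \<omega>) \<partial>M)"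
    by (simp add: sqE_def f_def)
  also have "\<dots> \<le> (\<integral>\<^sup>+\<omega>. g (S \<omega>, X \<omega>) \<partial>M)"
  proof (rule nn_integral_indep_le[OF measurable_past_imp_measurable[OF P] \<xi>_measurable[OF j eh]
        distr_pair_past_\<xi>[OF j eh P] f])
    show "g \<in> borel_measurable (borel \<Otimes>\<^sub>M borel)" unfolding g_def by measurable
    show "(\<integral>\<^sup>+s. f (p, s) \<partial>distr M (D i) (\<xi> i tt e h)) \<le> g p" for p
      using gradient_noise_second_moment[OF j] by (simp add: \<xi>_distr[OF j eh] f_def g_def)
  qed
  also have "\<dots> = sqE M S + ennreal (\<sigma>\<^sup>2)"
    using measurable_past_imp_measurable[OF S] by (simp add: g_def sqE_def nn_integral_add emeasure_space_1)
  finally show ?thesis .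
qed

definition noise :: "nat \<Rightarrow> nat \<Rightarrow> nat \<Rightarrow> nat \<Rightarrow> 'w \<Rightarrow> 'a" where
  "noise i tt e h \<omega> = G i (x i tt e h \<omega>) (\<xi> i tt e h \<omega>) - gF i (x i tt e h \<omega>)"

lemma noise_adapted:
  assumes "j < N" "i \<in> C j" "e < E" "h < H"
  shows "noise i tt e h \<in> borel_measurable (past (clock tt e (Suc h)))"
proof -
  have "x i tt e h \<in> borel_measurable (past (clock tt e (Suc h)))"
    using measurable_past_mono[OF x_adapted] assms by simp
  moreover have "\<xi> i tt e h \<in> measurable (past (clock tt e (Suc h))) (D i)"
    using assms by (intro measurable_past_\<xi>) auto
  ultimately show ?thesis
    unfolding noise_def[abs_def] using assms
    by (intro borel_measurable_diff measurable_G_comp measurable_compose[OF _ gF_borel]) auto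
qed

lemma sqE_noise_sum_le:
  assumes j: "j < N" "i \<in> C j" and e: "e < E"
  shows "m \<le> H \<Longrightarrow> sqE M (\<lambda>\<omega>. \<Sum>h<m. noise i tt e h \<omega>) \<le> ennreal (real m * \<sigma>\<^sup>2)"
proof (induction m)
  case (Suc m)
  then have m: "m < H" by simp
  have "noise i tt e h \<in> borel_measurable (past (clock tt e m))" if "h < m" for h
    using measurable_past_mono[OF noise_adapted[OF j e], of h tt "clock tt e m"] that m
    by (simp add: Suc_le_eq)
  then have "(\<lambda>\<omega>. \<Sum>h<m. noise i tt e h \<omega>) \<in> borel_measurable (past (clock tt e m))"
    by (intro borel_measurable_sum) auto
  then have "sqE M (\<lambda>\<omega>. \<Sum>h<Suc m. noise i tt e h \<omega>) \<le> sqE M (\<lambda>\<omega>. \<Sum>h<m. noise i tt e h \<omega>) + ennreal (\<sigma>\<^sup>2)"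
    unfolding noise_def using sqE_add_noise_le[OF j e m _ x_adapted[OF j e]] m by simp
  also have "\<dots> \<le> ennreal (real m * \<sigma>\<^sup>2) + ennreal (\<sigma>\<^sup>2)"
    using Suc m by (intro add_right_mono) simp
  also have "\<dots> = ennreal (real (Suc m) * \<sigma>\<^sup>2)"
    by (simp add: ennreal_plus[symmetric] algebra_simps del: ennreal_plus)
  finally show ?case .
qed (simp add: sqE_def)

lemma noise_measurable: "j < N \<Longrightarrow> i \<in> C j \<Longrightarrow> e < E \<Longrightarrow> h < H \<Longrightarrow> noise i tt e h \<in> borel_measurable M"
  by (rule measurable_past_imp_measurable[OF noise_adapted])

lemma xg_measurable: "j < N \<Longrightarrow> e \<le> E \<Longrightarrow> xg j tt e \<in> borel_measurable M"
  by (rule measurable_past_imp_measurable[OF xg_adapted])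

lemma x_measurable: "j < N \<Longrightarrow> i \<in> C j \<Longrightarrow> e < E \<Longrightarrow> h \<le> H \<Longrightarrow> x i tt e h \<in> borel_measurable M"
  by (rule measurable_past_imp_measurable[OF x_adapted])

definition correction_error :: "nat \<Rightarrow> nat \<Rightarrow> nat \<Rightarrow> nat \<Rightarrow> 'w \<Rightarrow> 'a" where
  "correction_error i j tt e \<omega> = z i tt e \<omega> + gF i (xg j tt e \<omega>)
    - (1 / real (card (C j))) *\<^sub>R (\<Sum>k\<in>C j. gF k (xg j tt e \<omega>))"

lemma correction_error_first:
  assumes j: "j < N"
  shows "ennreal (1 / real (card (C j))) * (\<Sum>i\<in>C j. sqE M (correction_error i j tt 0)) \<le> ennreal (\<sigma>\<^sup>2)"
proof -
  have "correction_error i j tt 0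
      = (\<lambda>\<omega>. - (noise i tt 0 0 \<omega> - (1 / real (card (C j))) *\<^sub>R (\<Sum>k\<in>C j. noise k tt 0 0 \<omega>)))" if "i \<in> C j" for i
    using that j E_pos H_pos
    by (simp add: fun_eq_iff correction_error_def noise_def z_0 xg_0 x_0 sum_subtractf algebra_simps)
  then have "(\<Sum>i\<in>C j. sqE M (correction_error i j tt 0))
      = (\<Sum>i\<in>C j. sqE M (\<lambda>\<omega>. noise i tt 0 0 \<omega> - (1 / real (card (C j))) *\<^sub>R (\<Sum>k\<in>C j. noise k tt 0 0 \<omega>)))"
    by (intro sum.cong refl) (simp, rule sqE_minus_commute)
  also have "\<dots> \<le> (\<Sum>i\<in>C j. sqE M (noise i tt 0 0))"
    using j E_pos H_pos by (intro sum_sqE_sub_mean_le noise_measurable) auto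
  finally have "ennreal (1 / real (card (C j))) * (\<Sum>i\<in>C j. sqE M (correction_error i j tt 0))
      \<le> ennreal (1 / real (card (C j))) * (\<Sum>i\<in>C j. sqE M (noise i tt 0 0))"
    by (rule mult_left_mono) simp
  also have "\<dots> \<le> ennreal (\<sigma>\<^sup>2) + ennreal (1 / real (card (C j))) * (\<Sum>i\<in>C j. 0)"
    using sqE_noise_sum_le[OF j _ _ , of _ 0 1 tt] j E_pos H_pos C_fin C_ne
    by (intro ennreal_mean_le) auto
  finally show ?thesis by simp
qed

lemma sqE_noise_mean_le:
  assumes j: "j < N" "i \<in> C j" and e: "e < E"
  shows "sqE M (\<lambda>\<omega>. (1 / real H) *\<^sub>R (\<Sum>h<H. noise i tt e h \<omega>)) \<le> ennreal (\<sigma>\<^sup>2 / real H)"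
proof -
  have "sqE M (\<lambda>\<omega>. (1 / real H) *\<^sub>R (\<Sum>h<H. noise i tt e h \<omega>))
      = ennreal ((1 / real H)\<^sup>2) * sqE M (\<lambda>\<omega>. \<Sum>h<H. noise i tt e h \<omega>)"
    using noise_measurable[OF j e] by (intro sqE_scaleR borel_measurable_sum) auto
  also have "\<dots> \<le> ennreal ((1 / real H)\<^sup>2) * ennreal (real H * \<sigma>\<^sup>2)"
    using sqE_noise_sum_le[OF j e order_refl] by (rule mult_left_mono) simp
  also have "\<dots> = ennreal (\<sigma>\<^sup>2 / real H)"
    using H_pos by (simp add: power2_eq_square flip: ennreal_mult)
  finally show ?thesis .
qed

lemma sqE_client_drift_le:
  assumes j: "j < N" "i \<in> C j" and e: "e < E"
  shows "sqE M (\<lambda>\<omega>. (1 / real H) *\<^sub>R (\<Sum>h<H. gF i (x i tt e h \<omega>) - gF i (xg j tt e \<omega>)))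
    \<le> ennreal (L\<^sup>2) * (ennreal (1 / real H) * (\<Sum>h<H. sqE M (\<lambda>\<omega>. xg j tt e \<omega> - x i tt e h \<omega>)))"
proof -
  have "sqE M (\<lambda>\<omega>. (1 / real H) *\<^sub>R (\<Sum>h<H. gF i (x i tt e h \<omega>) - gF i (xg j tt e \<omega>)))
      \<le> ennreal (1 / real H) * (\<Sum>h<H. sqE M (\<lambda>\<omega>. gF i (x i tt e h \<omega>) - gF i (xg j tt e \<omega>)))"
    using sqE_mean_le[of "{..<H}" "\<lambda>h \<omega>. gF i (x i tt e h \<omega>) - gF i (xg j tt e \<omega>)" M] j e
      measurable_compose[OF x_measurable gF_borel] measurable_compose[OF xg_measurable gF_borel]
    by (simp add: borel_measurable_diff)
  also have "\<dots> \<le> ennreal (1 / real H) * (\<Sum>h<H. ennreal (L\<^sup>2) * sqE M (\<lambda>\<omega>. xg j tt e \<omega> - x i tt e h \<omega>))"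
    using A1[OF j] x_measurable[OF j e] xg_measurable[OF j(1)] e
    by (intro mult_left_mono sum_mono) (auto simp: sqE_minus_commute[of M "\<lambda>\<omega>. xg j tt e \<omega>"]
        intro!: sqE_lipschitz_le borel_measurable_diff)
  finally show ?thesis by (simp add: sum_distrib_left ac_simps)
qed

lemma sqE_local_drift_le:
  assumes j: "j < N" "i \<in> C j" and e: "e < E"
  shows "sqE M (\<lambda>\<omega>. (1 / real H) *\<^sub>R (\<Sum>h<H. G i (x i tt e h \<omega>) (\<xi> i tt e h \<omega>)) - gF i (xg j tt (Suc e) \<omega>))
    \<le> ennreal (2 * \<sigma>\<^sup>2 / real H) + ennreal (4 * L\<^sup>2) * sqE M (\<lambda>\<omega>. xg j tt (Suc e) \<omega> - xg j tt e \<omega>)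
      + ennreal (4 * L\<^sup>2) * (ennreal (1 / real H) * (\<Sum>h<H. sqE M (\<lambda>\<omega>. xg j tt e \<omega> - x i tt e h \<omega>)))"
    (is "sqE M ?b \<le> _ + _ * ?\<Theta> + _ * (_ * ?Q)")
proof -
  let ?n = "\<lambda>\<omega>. (1 / real H) *\<^sub>R (\<Sum>h<H. noise i tt e h \<omega>)"
  let ?p = "\<lambda>\<omega>. (1 / real H) *\<^sub>R (\<Sum>h<H. gF i (x i tt e h \<omega>) - gF i (xg j tt e \<omega>))"
  let ?q = "\<lambda>\<omega>. gF i (xg j tt e \<omega>) - gF i (xg j tt (Suc e) \<omega>)"
  have gF_xg: "(\<lambda>\<omega>. gF i (xg j tt e' \<omega>)) \<in> borel_measurable M" if "e' \<le> E" for e'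
    using measurable_compose[OF xg_measurable[OF j(1) that] gF_borel[OF j]] by simp
  have "?b \<omega> = ?n \<omega> + (?p \<omega> + ?q \<omega>)" for \<omega>
    using H_pos
    by (simp add: noise_def sum_subtractf sum_constant_scaleR scaleR_right_diff_distrib algebra_simps)
  then have "sqE M ?b \<le> 2 * sqE M ?n + 4 * sqE M ?p + 4 * sqE M ?q"
    using j e noise_measurable gF_xg measurable_compose[OF x_measurable gF_borel]
    by (simp only:) (intro sqE_add3_le borel_measurable_scaleR borel_measurable_const
        borel_measurable_sum borel_measurable_diff; auto)
  moreover have "sqE M ?q \<le> ennreal (L\<^sup>2) * ?\<Theta>"
    using sqE_lipschitz_le[OF A1[OF j], of "xg j tt e" "xg j tt (Suc e)" M] xg_measurable[OF j(1)] e
    by (simp add: sqE_minus_commute[of M "xg j tt e"] borel_measurable_diff)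
  ultimately have "sqE M ?b
      \<le> 2 * ennreal (\<sigma>\<^sup>2 / real H) + 4 * (ennreal (L\<^sup>2) * (ennreal (1 / real H) * ?Q))
        + 4 * (ennreal (L\<^sup>2) * ?\<Theta>)"
    using sqE_noise_mean_le[OF j e] sqE_client_drift_le[OF j e]
    by (elim order_trans) (intro add_mono mult_left_mono; simp)
  also have "\<dots> = ennreal (2 * \<sigma>\<^sup>2 / real H) + ennreal (4 * L\<^sup>2) * ?\<Theta>
      + ennreal (4 * L\<^sup>2) * (ennreal (1 / real H) * ?Q)"
    using ennreal_mult[of 2 "\<sigma>\<^sup>2 / real H"] ennreal_mult[of 4 "L\<^sup>2"] by (simp add: ac_simps)
  finally show ?thesis .
qed

lemma correction_error_Suc:
  assumes e: "e < E" and j: "j < N"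
  shows "ennreal (1 / real (card (C j))) * (\<Sum>i\<in>C j. sqE M (correction_error i j tt (Suc e)))
    \<le> ennreal (2 * \<sigma>\<^sup>2 / real H) + ennreal (4 * L\<^sup>2) * (ennreal (1 / real H) *
        (ennreal (1 / real (card (C j))) * (\<Sum>i\<in>C j. \<Sum>h<H. sqE M (\<lambda>\<omega>. xg j tt e \<omega> - x i tt e h \<omega>))))
      + ennreal (4 * L\<^sup>2) * sqE M (\<lambda>\<omega>. xg j tt (Suc e) \<omega> - xg j tt e \<omega>)"
proof -
  let ?c = "real (card (C j))"
  define b where "b i \<omega> = (1 / real H) *\<^sub>R (\<Sum>h<H. G i (x i tt e h \<omega>) (\<xi> i tt e h \<omega>))
    - gF i (xg j tt (Suc e) \<omega>)" for i \<omega>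
  have "correction_error i j tt (Suc e) = (\<lambda>\<omega>. - (b i \<omega> - (1 / ?c) *\<^sub>R (\<Sum>k\<in>C j. b k \<omega>)))" if "i \<in> C j" for i
    using z_Suc_closed_form[OF j that e]
    by (simp add: fun_eq_iff correction_error_def b_def sum_subtractf algebra_simps flip: scaleR_sum_right)
  then have "(\<Sum>i\<in>C j. sqE M (correction_error i j tt (Suc e)))
      = (\<Sum>i\<in>C j. sqE M (\<lambda>\<omega>. b i \<omega> - (1 / ?c) *\<^sub>R (\<Sum>k\<in>C j. b k \<omega>)))"
    by (intro sum.cong refl) (simp, rule sqE_minus_commute)
  also have "\<dots> \<le> (\<Sum>i\<in>C j. sqE M (b i))"
  proof (rule sum_sqE_sub_mean_le)
    fix i assume i: "i \<in> C j"
    have "(\<lambda>\<omega>. G i (x i tt e h \<omega>) (\<xi> i tt e h \<omega>)) \<in> borel_measurable M" if "h < H" for h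
      using j i e that by (intro measurable_G_comp x_measurable \<xi>_measurable) auto
    then show "b i \<in> borel_measurable M"
      unfolding b_def[abs_def] using measurable_compose[OF xg_measurable gF_borel] j i e
      by (intro borel_measurable_diff borel_measurable_scaleR borel_measurable_const borel_measurable_sum) auto
  qed
  finally have "ennreal (1 / ?c) * (\<Sum>i\<in>C j. sqE M (correction_error i j tt (Suc e)))
      \<le> ennreal (1 / ?c) * (\<Sum>i\<in>C j. sqE M (b i))"
    by (rule mult_left_mono) simp
  also have "\<dots> \<le> (ennreal (2 * \<sigma>\<^sup>2 / real H) + ennreal (4 * L\<^sup>2) * sqE M (\<lambda>\<omega>. xg j tt (Suc e) \<omega> - xg j tt e \<omega>))
      + ennreal (1 / ?c) * (\<Sum>i\<in>C j. ennreal (4 * L\<^sup>2) *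
          (ennreal (1 / real H) * (\<Sum>h<H. sqE M (\<lambda>\<omega>. xg j tt e \<omega> - x i tt e h \<omega>))))"
    using C_fin[OF j] C_ne[OF j] sqE_local_drift_le[OF j _ e]
    by (intro ennreal_mean_le) (auto simp: b_def[abs_def] add.assoc)
  finally show ?thesis
    by (simp add: sum_distrib_left ac_simps)
qed

end

theorem lemmaC2p4:
  fixes N :: nat and C :: "nat \<Rightarrow> nat set"
    and D :: "nat \<Rightarrow> 's measure"
    and Fs :: "nat \<Rightarrow> 'a::euclidean_space \<Rightarrow> 's \<Rightarrow> real"
    and F :: "nat \<Rightarrow> 'a \<Rightarrow> real"
    and G :: "nat \<Rightarrow> 'a \<Rightarrow> 's \<Rightarrow> 'a"
    and gF :: "nat \<Rightarrow> 'a \<Rightarrow> 'a"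
    and L \<sigma> \<gamma> :: real and E H :: nat
    and M :: "'w measure"
    and \<xi> :: "nat \<Rightarrow> nat \<Rightarrow> nat \<Rightarrow> nat \<Rightarrow> 'w \<Rightarrow> 's"
    and x0 :: 'a
    and xbar :: "nat \<Rightarrow> 'w \<Rightarrow> 'a"
    and y :: "nat \<Rightarrow> nat \<Rightarrow> 'w \<Rightarrow> 'a"
    and xg :: "nat \<Rightarrow> nat \<Rightarrow> nat \<Rightarrow> 'w \<Rightarrow> 'a"
    and z :: "nat \<Rightarrow> nat \<Rightarrow> nat \<Rightarrow> 'w \<Rightarrow> 'a"
    and x :: "nat \<Rightarrow> nat \<Rightarrow> nat \<Rightarrow> nat \<Rightarrow> 'w \<Rightarrow> 'a"
    and t :: nat
  assumes N_pos: "N \<ge> 1"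
    and C_fin: "\<And>j. j < N \<Longrightarrow> finite (C j)"
    and C_ne: "\<And>j. j < N \<Longrightarrow> C j \<noteq> {}"
    and C_disj: "\<And>j j'. j < N \<Longrightarrow> j' < N \<Longrightarrow> j \<noteq> j' \<Longrightarrow> C j \<inter> C j' = {}"
    \<comment> \<open>client distributions and stochastic losses / gradients\<close>
    and D_prob: "\<And>j i. j < N \<Longrightarrow> i \<in> C j \<Longrightarrow> prob_space (D i)"
    and G_meas: "\<And>j i. j < N \<Longrightarrow> i \<in> C j \<Longrightarrow>
        (\<lambda>(v, s). G i v s) \<in> borel_measurable (borel \<Otimes>\<^sub>M D i)"
    and Fs_grad: "\<And>j i v s. j < N \<Longrightarrow> i \<in> C j \<Longrightarrow>
        ((\<lambda>u. Fs i u s) has_derivative (\<lambda>h. G i v s \<bullet> h)) (at v)"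
    and F_def: "\<And>j i v. j < N \<Longrightarrow> i \<in> C j \<Longrightarrow> F i v = (\<integral>s. Fs i v s \<partial>D i)"
    and F_grad: "\<And>j i v. j < N \<Longrightarrow> i \<in> C j \<Longrightarrow>
        (F i has_derivative (\<lambda>h. gF i v \<bullet> h)) (at v)"
    \<comment> \<open>(A1)\<close>
    and A1: "\<And>j i u v. j < N \<Longrightarrow> i \<in> C j \<Longrightarrow> norm (gF i u - gF i v) \<le> L * norm (u - v)"
    \<comment> \<open>(A2)\<close>
    and A2_int: "\<And>j i v. j < N \<Longrightarrow> i \<in> C j \<Longrightarrow> integrable (D i) (G i v)"
    and A2_unb: "\<And>j i v. j < N \<Longrightarrow> i \<in> C j \<Longrightarrow> (\<integral>s. G i v s \<partial>D i) = gF i v"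
    and A2_var: "\<And>j i v. j < N \<Longrightarrow> i \<in> C j \<Longrightarrow>
        (\<integral>\<^sup>+ s. ennreal ((norm (G i v s - gF i v))\<^sup>2) \<partial>D i) \<le> ennreal (\<sigma>\<^sup>2)"
    \<comment> \<open>algorithm parameters\<close>
    and E_pos: "E \<ge> 1" and H_pos: "H \<ge> 1" and \<gamma>_pos: "\<gamma> > 0"
    \<comment> \<open>samples: independent, \<xi> i t e h distributed as D i\<close>
    and M_prob: "prob_space M"
    and \<xi>_indep: "prob_space.indep_vars M (\<lambda>(i, tt, e, h). D i) (\<lambda>(i, tt, e, h). \<xi> i tt e h)
        {(i, tt, e, h). i \<in> (\<Union>j<N. C j) \<and> e < E \<and> h < H}"
    and \<xi>_distr: "\<And>j i tt e h. j < N \<Longrightarrow> i \<in> C j \<Longrightarrow> e < E \<Longrightarrow> h < H \<Longrightarrow>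
        distr M (D i) (\<xi> i tt e h) = D i"
    \<comment> \<open>MTGC iterates (pointwise in the outcome \<omega>)\<close>
    and y_init: "\<And>j \<omega>. j < N \<Longrightarrow> y j 0 \<omega> =
        - ((1 / real (card (C j))) *\<^sub>R (\<Sum>i\<in>C j. G i x0 (\<xi> i 0 0 0 \<omega>)))
        + (1 / real N) *\<^sub>R (\<Sum>j'<N. (1 / real (card (C j'))) *\<^sub>R (\<Sum>i\<in>C j'. G i x0 (\<xi> i 0 0 0 \<omega>)))"
    and xbar_init: "\<And>\<omega>. xbar 0 \<omega> = x0"
    and xg_0: "\<And>j tt \<omega>. j < N \<Longrightarrow> xg j tt 0 \<omega> = xbar tt \<omega>"
    and z_0: "\<And>j i tt \<omega>. j < N \<Longrightarrow> i \<in> C j \<Longrightarrow> z i tt 0 \<omega> =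
        - G i (xbar tt \<omega>) (\<xi> i tt 0 0 \<omega>)
        + (1 / real (card (C j))) *\<^sub>R (\<Sum>i'\<in>C j. G i' (xbar tt \<omega>) (\<xi> i' tt 0 0 \<omega>))"
    and x_0: "\<And>j i tt e \<omega>. j < N \<Longrightarrow> i \<in> C j \<Longrightarrow> e < E \<Longrightarrow> x i tt e 0 \<omega> = xg j tt e \<omega>"
    and x_step: "\<And>j i tt e h \<omega>. j < N \<Longrightarrow> i \<in> C j \<Longrightarrow> e < E \<Longrightarrow> h < H \<Longrightarrow>
        x i tt e (Suc h) \<omega> = x i tt e h \<omega>
          - \<gamma> *\<^sub>R (G i (x i tt e h \<omega>) (\<xi> i tt e h \<omega>) + z i tt e \<omega> + y j tt \<omega>)"
    and xg_step: "\<And>j tt e \<omega>. j < N \<Longrightarrow> e < E \<Longrightarrow>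
        xg j tt (Suc e) \<omega> = (1 / real (card (C j))) *\<^sub>R (\<Sum>i\<in>C j. x i tt e H \<omega>)"
    and z_step: "\<And>j i tt e \<omega>. j < N \<Longrightarrow> i \<in> C j \<Longrightarrow> e < E \<Longrightarrow>
        z i tt (Suc e) \<omega> = z i tt e \<omega> + (1 / (real H * \<gamma>)) *\<^sub>R (x i tt e H \<omega> - xg j tt (Suc e) \<omega>)"
    and xbar_step: "\<And>tt \<omega>. xbar (Suc tt) \<omega> = (1 / real N) *\<^sub>R (\<Sum>j<N. xg j tt E \<omega>)"
    and y_step: "\<And>j tt \<omega>. j < N \<Longrightarrow>
        y j (Suc tt) \<omega> = y j tt \<omega> + (1 / (real H * real E * \<gamma>)) *\<^sub>R (xg j tt E \<omega> - xbar (Suc tt) \<omega>)"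
  shows "(\<Sum>e<E. ennreal (1 / real N) * (\<Sum>j<N.
            ennreal (1 / real (card (C j))) * (\<Sum>i\<in>C j.
              sqE M (\<lambda>\<omega>. z i t e \<omega> + gF i (xg j t e \<omega>)
                 - (1 / real (card (C j))) *\<^sub>R (\<Sum>i'\<in>C j. gF i' (xg j t e \<omega>))))))
      \<le> ennreal (4 * L\<^sup>2) *
          (\<Sum>e<E. ennreal (1 / (real N * real H)) * (\<Sum>j<N.
             ennreal (1 / real (card (C j))) * (\<Sum>i\<in>C j. \<Sum>h<H.
               sqE M (\<lambda>\<omega>. xg j t e \<omega> - x i t e h \<omega>))))
        + ennreal (4 * L\<^sup>2) *
          (\<Sum>e<E. ennreal (1 / real N) * (\<Sum>j<N. sqE M (\<lambda>\<omega>. xg j t (Suc e) \<omega> - xg j t e \<omega>)))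
        + ennreal (2 * (real E / real H) * \<sigma>\<^sup>2)
        + ennreal (\<sigma>\<^sup>2)"
proof -
  interpret mtgc M N C D G gF L \<sigma> \<gamma> E H \<xi> x0 xbar y xg z x
    by (intro mtgc.intro mtgc_axioms.intro) (fact assms)+
  have E_term: "of_nat E * ennreal (2 * \<sigma>\<^sup>2 / real H) = ennreal (2 * (real E / real H) * \<sigma>\<^sup>2)"
    by (simp add: ennreal_of_nat_eq_real_of_nat flip: ennreal_mult)
  show ?thesis
    using sum_mean_le_of_epoch_bounds[where
        Z = "\<lambda>e j. ennreal (1 / real (card (C j))) * (\<Sum>i\<in>C j. sqE M (correction_error i j t e))",
        OF N_pos E_pos correction_error_first correction_error_Suc[OF Suc_lessD]]
    by (simp only: E_term correction_error_def[abs_def])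
qed

end
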